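(* Let $d\ge2$ and $n\in\mathbb N_0$. Every $Z\in\mathcal V_n^d(\mathsf w_{-1,-1})$ satisfies $$\mathcal D_{-1}Z=-n(n+d-2)\,Z.$$ Moreover, $\mathcal V_n^d(\mathsf w_{-1,-1})=\mathcal H_n^{d,0}\oplus(1-t)\,\mathcal V_{n-1}^d(\mathsf w_{-1,1})$ (with the second summand $\{0\}$ when $n=0$).
   Context: Cone points $(x,t)=(t\xi,t)$, $\xi\in\mathbb S^{d-1}$. $\mathcal D_\gamma=t(1-t)\frac{\partial^2}{\partial t^2}+\big(d-1-(d+\gamma)t\big)\frac{\partial}{\partial t}+t^{-1}\Delta_0^{(\xi)}$, acting on functions of $(t,\xi)$, $t$-derivatives at fixed $\xi$, $\Delta_0^{(\xi)}$ the Laplace–Beltrami operator on $\mathbb S^{d-1}$. $\mathcal H_m^{d,0}$: homogeneous harmonic polynomials of degree $m$ on $\mathbb R^d$, with basis $\{Y_\ell^m\}$ orthonormal on $\mathbb S^{d-1}$ for normalized surface measure. Jacobi polynomials for real parameters: $P_n^{(\alpha,\beta)}(u)=\sum_{k=0}^n\frac{(\alpha+k+1)_{n-k}(-n)_k(n+\alpha+\beta+1)_k}{n!\,k!}(\frac{1-u}{2})^k$; $A_n^{(\alpha,\beta)}=2^n/(n+\alpha+\beta+1)_n$; $\widehat P_n^{(\alpha,\beta)}=A_n^{(\alpha,\beta)}P_n^{(\alpha,\beta)}$. $J_n^{(\alpha,-1)}(u)=1$ for $n=0$ and $J_n^{(\alpha,-1)}(u)=\int_{-1}^u\widehat P_{n-1}^{(\alpha+1,0)}(w)\mathrm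 dw$ for $n\ge1$. $\mathcal V_n^d(\mathsf w_{-1,-1})$ is the span of $\{J_{n-m}^{(2m+d-2,-1)}(1-2t)Y_\ell^m(x):0\le m\le n,\ \ell\}$ (the Sobolev orthogonal polynomials of degree $n$ for $\beta=-1$, $s=1$), and $\mathcal V_k^d(\mathsf w_{-1,1})$ is the span of $\{P_{k-m}^{(2m+d-2,1)}(1-2t)Y_\ell^m(x):0\le m\le k,\ \ell\}$ (the orthogonal polynomials of degree $k$ on the cone for the weight $t^{-1}(1-t)$); all as functions on the cone. *)

theory Defs
  imports "HOL-Analysis.Analysis"
begin

definition jacobiP :: "nat \<Rightarrow> real \<Rightarrow> real \<Rightarrow> real \<Rightarrow> real" where
  "jacobiP n a b u =
     (\<Sum>k\<le>n. pochhammer (a + real k + 1) (n - k) * pochhammer (- real n) k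
              * pochhammer (real n + a + b + 1) k / (fact n * fact k) * ((1 - u) / 2) ^ k)"

definition jacobiA :: "nat \<Rightarrow> real \<Rightarrow> real \<Rightarrow> real" where
  "jacobiA n a b = 2 ^ n / pochhammer (real n + a + b + 1) n"

definition jacobiPhat :: "nat \<Rightarrow> real \<Rightarrow> real \<Rightarrow> real \<Rightarrow> real" where
  "jacobiPhat n a b u = jacobiA n a b * jacobiP n a b u"

definition jacobiJ :: "nat \<Rightarrow> real \<Rightarrow> real \<Rightarrow> real" where
  "jacobiJ n a u = (if n = 0 then 1 else integral {-1..u} (\<lambda>w. jacobiPhat (n - 1) (a + 1) 0 w))"

definition pdiff :: "'n::finite \<Rightarrow> (real^'n \<Rightarrow> real) \<Rightarrow> real^'n \<Rightarrow> real" where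
  "pdiff i f x = deriv (\<lambda>s. f (x + s *\<^sub>R axis i 1)) 0"

definition laplacian :: "(real^'n::finite \<Rightarrow> real) \<Rightarrow> real^'n \<Rightarrow> real" where
  "laplacian f x = (\<Sum>i\<in>UNIV. pdiff i (pdiff i f) x)"

text \<open>$\mathcal H_m^{d,0}$: homogeneous harmonic polynomials of degree $m$ on $\mathbb R^d$, $d = CARD('n)$.\<close>
definition harm :: "nat \<Rightarrow> (real^'n::finite \<Rightarrow> real) set" where
  "harm m = {Y. polynomial_function Y \<and> (\<forall>c x. Y (c *\<^sub>R x) = c ^ m * Y x)
                \<and> (\<forall>x. laplacian Y x = 0)}"

text \<open>Laplace--Beltrami operator on the sphere: the Euclidean Laplacian of the
  degree-0 homogeneous extension, evaluated at the point of the sphere.\<close>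
definition laplace_beltrami :: "(real^'n::finite \<Rightarrow> real) \<Rightarrow> real^'n \<Rightarrow> real" where
  "laplace_beltrami g \<xi> = laplacian (\<lambda>x. g (x /\<^sub>R norm x)) \<xi>"

definition Dcone :: "real \<Rightarrow> (real \<Rightarrow> real^'n::finite \<Rightarrow> real) \<Rightarrow> real \<Rightarrow> real^'n \<Rightarrow> real" where
  "Dcone \<gamma> F t \<xi> =
     t * (1 - t) * deriv (\<lambda>s. deriv (\<lambda>r. F r \<xi>) s) t
     + (real CARD('n) - 1 - (real CARD('n) + \<gamma>) * t) * deriv (\<lambda>r. F r \<xi>) t
     + laplace_beltrami (F t) \<xi> / t"

definition fspan :: "('a \<Rightarrow> 'b \<Rightarrow> real) set \<Rightarrow> ('a \<Rightarrow> 'b \<Rightarrow> real) set" where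
  "fspan G = {F. \<exists>S c. finite S \<and> S \<subseteq> G \<and> F = (\<lambda>t \<xi>. \<Sum>g\<in>S. c g * g t \<xi>)}"

text \<open>$\mathcal V_n^d(\mathsf w_{-1,-1})$, functions of $(t,\xi)$, point $(t\xi,t)$.\<close>
definition Vsob :: "nat \<Rightarrow> (real \<Rightarrow> real^'n::finite \<Rightarrow> real) set" where
  "Vsob n = fspan {(\<lambda>t \<xi>. jacobiJ (n - m) (real (2 * m) + real CARD('n) - 2) (1 - 2 * t)
                          * Y (t *\<^sub>R \<xi>)) | m Y. m \<le> n \<and> Y \<in> harm m}"

definition Vop :: "nat \<Rightarrow> (real \<Rightarrow> real^'n::finite \<Rightarrow> real) set" where
  "Vop k = fspan {(\<lambda>t \<xi>. jacobiP (k - m) (real (2 * m) + real CARD('n) - 2) 1 (1 - 2 * t)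
                          * Y (t *\<^sub>R \<xi>)) | m Y. m \<le> k \<and> Y \<in> harm m}"

definition cone_restrict :: "(real \<Rightarrow> real^'n::finite \<Rightarrow> real) \<Rightarrow> real \<Rightarrow> real^'n \<Rightarrow> real" where
  "cone_restrict F = (\<lambda>t \<xi>. if 0 \<le> t \<and> t \<le> 1 \<and> norm \<xi> = 1 then F t \<xi> else 0)"

end

theory Submission
  imports Defs "HOL-Computational_Algebra.Polynomial"
begin

text \<open>
  Write a generator of $\mathcal V_n^d(\mathsf w_{-1,-1})$ on the cone as
  $J_{n-m}^{(a,-1)}(1-2t)\,t^m\,Y(\xi)$ with $a = 2m+d-2$ and $Y$ harmonic of degree $m$.
  The Laplace--Beltrami operator acts on $Y$ by $-m(m+d-2)$, and
  $J_k^{(a,-1)}(1-2t)$ is a constant multiple of $(1-t)P_{k-1}^{(a,1)}(1-2t)$, so it satisfies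
  $t(1-t)R'' + (a+1)(1-t)R' + k(k+a)R = 0$, a consequence of the hypergeometric equation of
  $P_{k-1}^{(a,1)}$. Substituting $R(t)\,t^m$ into $\mathcal D_{-1}$ turns these two equations
  into the eigenvalue $-n(n+d-2)$, independently of $m$.
  The same factorisation shows that the generators with $m<n$ are $(1-t)$ times nonzero multiples
  of the generators of $\mathcal V_{n-1}^d(\mathsf w_{-1,1})$, while the one with $m=n$ is $Y(t\xi)$
  itself; this gives the decomposition, which is direct because a harmonic polynomial vanishing
  at $t=1$ vanishes on the whole cone.
\<close>

section \<open>Jacobi polynomials in the variable of the cone\<close>

definition jacobi_coeff :: "nat \<Rightarrow> real \<Rightarrow> real \<Rightarrow> nat \<Rightarrow> real" where
  "jacobi_coeff k a b j = pochhammer (a + real j + 1) (k - j) * pochhammer (- real k) j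
     * pochhammer (real k + a + b + 1) j / (fact k * fact j)"

text \<open>The Jacobi polynomial in the variable $t$ of the cone, i.e.\ $t \mapsto P_k^{(a,b)}(1-2t)$.\<close>
definition jacobi_poly :: "nat \<Rightarrow> real \<Rightarrow> real \<Rightarrow> real poly" where
  "jacobi_poly k a b = (\<Sum>j\<le>k. monom (jacobi_coeff k a b j) j)"

lemma jacobi_coeff_eq_0: "k < j \<Longrightarrow> jacobi_coeff k a b j = 0"
  unfolding jacobi_coeff_def by (auto simp: pochhammer_eq_0_iff)

lemma coeff_jacobi_poly: "coeff (jacobi_poly k a b) j = jacobi_coeff k a b j"
  unfolding jacobi_poly_def by (auto simp: coeff_sum coeff_monom jacobi_coeff_eq_0)

lemma poly_jacobi_poly: "poly (jacobi_poly k a b) t = jacobiP k a b (1 - 2 * t)"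
  unfolding jacobi_poly_def jacobiP_def jacobi_coeff_def
  by (simp add: poly_sum poly_monom mult.commute)

lemma jacobi_coeff_Suc:
  "real (Suc i) * (real i + a + 1) * jacobi_coeff k a b (Suc i)
     = (real i - real k) * (real k + a + b + 1 + real i) * jacobi_coeff k a b i"
proof (cases "i < k")
  case True
  then obtain r where r: "k - i = Suc r" and r': "k - Suc i = r"
    by (metis Suc_diff_Suc)
  define P where "P = pochhammer (a + real i + 2) r"
  define Q where "Q = pochhammer (- real k) i"
  define R where "R = pochhammer (real k + a + b + 1) i"
  have Suc_i: "jacobi_coeff k a b (Suc i) = P * (Q * (real i - real k))
      * (R * (real k + a + b + 1 + real i)) / (fact k * (real (Suc i) * fact i))"
    unfolding jacobi_coeff_def r' P_def Q_def R_def pochhammer_rec'[of "- real k" i]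
      pochhammer_rec'[of "real k + a + b + 1" i] fact_Suc
    by (simp add: algebra_simps)
  have i: "jacobi_coeff k a b i = (a + real i + 1) * P * Q * R / (fact k * fact i)"
    unfolding jacobi_coeff_def r P_def Q_def R_def pochhammer_rec[of "a + real i + 1" r]
    by (simp add: algebra_simps)
  have "fact k * fact i \<noteq> (0::real)" by simp
  then show ?thesis
    unfolding Suc_i i by (simp add: field_simps del: of_nat_Suc)
next
  case False
  then show ?thesis
    by (cases "i = k") (auto simp: jacobi_coeff_eq_0)
qed

text \<open>The hypergeometric equation of $P_k^{(a,b)}(1-2t)$, coefficientwise.\<close>
lemma jacobi_poly_ode_poly:
  "pCons 0 (pderiv (pderiv (jacobi_poly k a b)) - pCons 0 (pderiv (pderiv (jacobi_poly k a b))))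
   + smult (a + 1) (pderiv (jacobi_poly k a b)) - smult (a + b + 2) (pCons 0 (pderiv (jacobi_poly k a b)))
   + smult (real k * (real k + a + b + 1)) (jacobi_poly k a b) = 0" (is "?L = 0")
proof (rule poly_eqI)
  fix j
  have "coeff ?L j = 0"
  proof (cases j)
    case 0
    then show ?thesis
      using jacobi_coeff_Suc[of 0 a k b] by (simp add: coeff_pderiv coeff_jacobi_poly algebra_simps)
  next
    case (Suc i)
    then show ?thesis
      using jacobi_coeff_Suc[of j a k b]
      by (cases i) (simp_all add: coeff_pderiv coeff_jacobi_poly algebra_simps)
  qed
  then show "coeff ?L j = coeff 0 j" by simp
qed

lemma jacobi_poly_ode:
  "t * (1 - t) * poly (pderiv (pderiv (jacobi_poly k a b))) t
   + (a + 1 - (a + b + 2) * t) * poly (pderiv (jacobi_poly k a b)) t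
   + real k * (real k + a + b + 1) * poly (jacobi_poly k a b) t = 0"
  using arg_cong[OF jacobi_poly_ode_poly, of "\<lambda>p. poly p t"] by (simp add: algebra_simps)

lemma jacobi_coeff_one_minus_X:
  "real (Suc i) * (jacobi_coeff N a 1 i - jacobi_coeff N a 1 (Suc i))
     = real (Suc N) * jacobi_coeff N (a + 1) 0 i"
proof (cases "i < N")
  case True
  then obtain r where r: "N - i = Suc r" and r': "N - Suc i = r"
    by (metis Suc_diff_Suc)
  have "real r = real N - real i - 1" using True r' by linarith
  define G where "G = pochhammer (a + real i + 2) r * pochhammer (- real N) i
    * pochhammer (real N + a + 2) i / (fact N * fact i)"
  have Suc_i: "jacobi_coeff N a 1 (Suc i)
      = G * (real i - real N) * (real N + a + 2 + real i) / (real i + 1)"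
    unfolding jacobi_coeff_def r' G_def pochhammer_rec'[of "- real N" i]
      pochhammer_rec'[of "real N + a + 1 + 1" i] fact_Suc
    by (simp add: field_simps)
  have i: "jacobi_coeff N a 1 i = (a + real i + 1) * G"
    unfolding jacobi_coeff_def r G_def pochhammer_rec[of "a + real i + 1" r]
    by (simp add: algebra_simps)
  have i': "jacobi_coeff N (a + 1) 0 i = (a + real N + 1) * G"
    unfolding jacobi_coeff_def r G_def pochhammer_rec'[of "a + 1 + real i + 1" r] \<open>real r = _\<close>
    by (simp add: algebra_simps)
  have "real i + 1 \<noteq> 0" by linarith
  then show ?thesis
    unfolding Suc_i i i' by (simp add: field_simps)
next
  case False
  then have "jacobi_coeff N a 1 (Suc i) = 0" by (intro jacobi_coeff_eq_0) simp
  moreover have "i = N \<or> N < i" using False by linarith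
  ultimately show ?thesis
    by (auto simp: jacobi_coeff_eq_0) (simp add: jacobi_coeff_def algebra_simps)
qed

lemma pderiv_one_minus_X_jacobi_poly:
  "pderiv (jacobi_poly N a 1 - pCons 0 (jacobi_poly N a 1))
     = smult (- real (Suc N)) (jacobi_poly N (a + 1) 0)"
proof (rule poly_eqI)
  fix i
  show "coeff (pderiv (jacobi_poly N a 1 - pCons 0 (jacobi_poly N a 1))) i
      = coeff (smult (- real (Suc N)) (jacobi_poly N (a + 1) 0)) i"
    using jacobi_coeff_one_minus_X[of i N a]
    by (simp add: coeff_pderiv coeff_jacobi_poly algebra_simps)
qed

text \<open>$J_k^{(a,-1)}(1-2t)$ as a polynomial in $t$: a multiple of $(1-t)P_{k-1}^{(a,1)}(1-2t)$.\<close>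
definition jacobiJ_poly :: "nat \<Rightarrow> real \<Rightarrow> real poly" where
  "jacobiJ_poly k a = (if k = 0 then 1 else
     smult (2 * jacobiA (k - 1) (a + 1) 0 / real k)
       (jacobi_poly (k - 1) a 1 - pCons 0 (jacobi_poly (k - 1) a 1)))"

lemma poly_jacobiJ_poly:
  "0 < k \<Longrightarrow> poly (jacobiJ_poly k a) t
     = 2 * jacobiA (k - 1) (a + 1) 0 / real k * ((1 - t) * jacobiP (k - 1) a 1 (1 - 2 * t))"
  unfolding jacobiJ_poly_def by (simp add: poly_jacobi_poly algebra_simps)

lemma poly_jacobiJ_poly_1: "0 < k \<Longrightarrow> poly (jacobiJ_poly k a) 1 = 0"
  by (simp add: poly_jacobiJ_poly)

lemma pderiv_jacobiJ_poly:
  "0 < k \<Longrightarrow> pderiv (jacobiJ_poly k a)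
     = smult (- 2 * jacobiA (k - 1) (a + 1) 0) (jacobi_poly (k - 1) (a + 1) 0)"
  using pderiv_one_minus_X_jacobi_poly[of "k - 1" a]
  by (simp add: jacobiJ_poly_def pderiv_smult del: of_nat_Suc)

lemma jacobiJ_eq_poly:
  assumes "t \<le> 1"
  shows "jacobiJ k a (1 - 2 * t) = poly (jacobiJ_poly k a) t"
proof (cases "k = 0")
  case True
  then show ?thesis by (simp add: jacobiJ_def jacobiJ_poly_def)
next
  case False
  define F where "F = (\<lambda>w. poly (jacobiJ_poly k a) ((1 - w) / 2))"
  have "(F has_real_derivative jacobiPhat (k - 1) (a + 1) 0 w) (at w)" for w
  proof -
    have "(F has_real_derivative poly (pderiv (jacobiJ_poly k a)) ((1 - w) / 2) * (- 1 / 2)) (at w)"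
      unfolding F_def by (rule DERIV_chain2[OF poly_DERIV]) (auto intro!: derivative_eq_intros)
    then show ?thesis
      using False by (simp add: pderiv_jacobiJ_poly jacobiPhat_def poly_jacobi_poly field_simps)
  qed
  then have "(jacobiPhat (k - 1) (a + 1) 0 has_integral F (1 - 2 * t) - F (- 1)) {-1..1 - 2 * t}"
    using assms by (intro fundamental_theorem_of_calculus)
      (auto simp: has_real_derivative_iff_has_vector_derivative has_vector_derivative_at_within)
  then show ?thesis
    using False by (simp add: jacobiJ_def integral_unique F_def poly_jacobiJ_poly_1)
qed

lemma jacobiJ_eq_jacobiP:
  assumes "0 < k" and "t \<le> 1"
  shows "jacobiJ k a (1 - 2 * t)
    = 2 * jacobiA (k - 1) (a + 1) 0 / real k * ((1 - t) * jacobiP (k - 1) a 1 (1 - 2 * t))"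
  using assms by (simp add: jacobiJ_eq_poly poly_jacobiJ_poly)

lemma jacobiA_pos: "0 \<le> a \<Longrightarrow> 0 < jacobiA k (a + 1) 0"
  unfolding jacobiA_def by (intro divide_pos_pos pochhammer_pos) auto

lemma jacobiJ_poly_ode:
  "t * (1 - t) * poly (pderiv (pderiv (jacobiJ_poly k a))) t
   + (a + 1) * (1 - t) * poly (pderiv (jacobiJ_poly k a)) t
   + real k * (real k + a) * poly (jacobiJ_poly k a) t = 0"
proof (cases "k = 0")
  case True
  then show ?thesis by (simp add: jacobiJ_poly_def)
next
  case False
  define P where "P = jacobi_poly (k - 1) a 1"
  define Q where "Q = P - pCons 0 P"
  have "t * (1 - t) * poly (pderiv (pderiv P)) t + (a + 1 - (a + 1 + 2) * t) * poly (pderiv P) t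
        + (real k - 1) * (real k + a + 1) * poly P t = 0"
    using jacobi_poly_ode[of t "k - 1" a 1] False by (simp add: P_def of_nat_diff algebra_simps)
  \<comment> \<open>the equation for $(1-t)P$ reduces to that of $P$ since $k(k+a) - (a+1) = (k-1)(k+a+1)$\<close>
  moreover have "t * (1 - t) * poly (pderiv (pderiv Q)) t + (a + 1) * (1 - t) * poly (pderiv Q) t
      + real k * (real k + a) * poly Q t
    = (1 - t) * (t * (1 - t) * poly (pderiv (pderiv P)) t + (a + 1 - (a + 1 + 2) * t) * poly (pderiv P) t
        + (real k - 1) * (real k + a + 1) * poly P t)"
    unfolding Q_def by (simp add: pderiv_diff pderiv_add pderiv_pCons algebra_simps)
  ultimately have Q: "t * (1 - t) * poly (pderiv (pderiv Q)) t + (a + 1) * (1 - t) * poly (pderiv Q) t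
      + real k * (real k + a) * poly Q t = 0"
    by simp
  define c where "c = 2 * jacobiA (k - 1) (a + 1) 0 / real k"
  have "jacobiJ_poly k a = smult c Q"
    using False by (simp add: jacobiJ_poly_def c_def P_def Q_def)
  then show ?thesis
    using arg_cong[OF Q, of "(*) c"] by (simp add: pderiv_smult algebra_simps)
qed

lemma pderiv_sum: "pderiv (\<Sum>x\<in>A. f x) = (\<Sum>x\<in>A. pderiv (f x))"
  by (induction A rule: infinite_finite_induct) (simp_all add: pderiv_add)

lemma poly_pderiv_times_power:
  assumes "t \<noteq> 0"
  shows "poly (pderiv (p * monom 1 m)) t = (poly (pderiv p) t + real m * poly p t / t) * t ^ m"
  using assms by (cases m) (simp_all add: pderiv_mult pderiv_monom poly_monom field_simps)

lemma poly_pderiv2_times_power: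
  assumes "t \<noteq> 0"
  shows "poly (pderiv (pderiv (p * monom 1 m))) t = (poly (pderiv (pderiv p)) t
      + 2 * real m * poly (pderiv p) t / t + real m * (real m - 1) * poly p t / t\<^sup>2) * t ^ m"
proof (cases m)
  case (Suc j)
  with assms show ?thesis
    by (cases j) (simp_all add: pderiv_mult pderiv_add pderiv_monom poly_monom power2_eq_square field_simps)
qed (simp add: pderiv_mult pderiv_add pderiv_monom poly_monom)

lemma jacobiJ_poly_times_power_ode:
  fixes d :: real
  assumes "0 < t" "m \<le> n"
  defines "Q \<equiv> jacobiJ_poly (n - m) (real (2 * m) + d - 2) * monom 1 m"
  shows "t * (1 - t) * poly (pderiv (pderiv Q)) t + (d - 1) * (1 - t) * poly (pderiv Q) t
         - real m * (real m + d - 2) * poly Q t / t = - (real n * (real n + d - 2)) * poly Q t"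
proof -
  define R where "R = jacobiJ_poly (n - m) (real (2 * m) + d - 2)"
  have Q1: "poly (pderiv Q) t = (poly (pderiv R) t + real m * poly R t / t) * t ^ m"
    unfolding Q_def R_def[symmetric] using assms(1) by (intro poly_pderiv_times_power) simp
  have Q2: "poly (pderiv (pderiv Q)) t = (poly (pderiv (pderiv R)) t + 2 * real m * poly (pderiv R) t / t
      + real m * (real m - 1) * poly R t / t\<^sup>2) * t ^ m"
    unfolding Q_def R_def[symmetric] using assms(1) by (intro poly_pderiv2_times_power) simp
  have ode: "t * (1 - t) * poly (pderiv (pderiv R)) t + (real (2 * m) + d - 1) * (1 - t) * poly (pderiv R) t
      = - ((real n - real m) * (real n + real m + d - 2)) * poly R t"
    using jacobiJ_poly_ode[of t "n - m" "real (2 * m) + d - 2"] assms(2)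
    by (simp add: R_def of_nat_diff algebra_simps)
  have "t * (1 - t) * poly (pderiv (pderiv Q)) t + (d - 1) * (1 - t) * poly (pderiv Q) t
         - real m * (real m + d - 2) * poly Q t / t
      = t ^ m * (t * (1 - t) * poly (pderiv (pderiv R)) t + (real (2 * m) + d - 1) * (1 - t) * poly (pderiv R) t
         - real m * (real m + d - 2) * poly R t)"
    using assms(1) unfolding Q1 Q2 by (simp add: Q_def R_def poly_monom power2_eq_square field_simps)
  also have "\<dots> = - (real n * (real n + d - 2)) * poly Q t"
    unfolding ode by (simp add: Q_def R_def poly_monom algebra_simps)
  finally show ?thesis .
qed

section \<open>The Laplacian along coordinate axes\<close>

lemma deriv_shift_0: "deriv (\<lambda>r. f (s + r)) 0 = deriv f s"
proof -
  have "((\<lambda>r. f (r + s)) has_field_derivative D) (at 0) \<longleftrightarrow> (f has_field_derivative D) (at s)" for D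
    using DERIV_shift[of f D 0 s] by simp
  then show ?thesis by (simp add: deriv_def add.commute)
qed

lemma laplacian_eq_sum_deriv_deriv:
  "laplacian f x = (\<Sum>i\<in>UNIV. deriv (deriv (\<lambda>r. f (x + r *\<^sub>R axis i 1))) 0)"
proof -
  have "deriv (\<lambda>r. f (x + s *\<^sub>R axis i 1 + r *\<^sub>R axis i 1)) 0 = deriv (\<lambda>r. f (x + r *\<^sub>R axis i 1)) s"
    for s i
    using deriv_shift_0[of "\<lambda>r. f (x + r *\<^sub>R axis i 1)" s] by (simp add: scaleR_add_left add.assoc)
  then show ?thesis unfolding laplacian_def pdiff_def by simp
qed

lemma DERIV_deriv_eventually:
  assumes "\<forall>\<^sub>F r in nhds x. (f has_real_derivative f' r) (at r)" and "(f' has_real_derivative v) (at x)"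
  shows "(deriv f has_real_derivative v) (at x)"
proof -
  have "\<forall>\<^sub>F r in nhds x. deriv f r = f' r"
    using assms(1) by eventually_elim (rule DERIV_imp_deriv)
  with assms(2) show ?thesis by (subst DERIV_cong_ev) auto
qed

lemma deriv_deriv_eqI:
  assumes "\<forall>\<^sub>F r in nhds x. (f has_real_derivative f' r) (at r)" and "(f' has_real_derivative v) (at x)"
  shows "deriv (deriv f) x = v"
  using DERIV_deriv_eventually[OF assms] by (rule DERIV_imp_deriv)

definition twice_differentiable_along_axes :: "(real^'n::finite \<Rightarrow> real) \<Rightarrow> real^'n \<Rightarrow> bool" where
  "twice_differentiable_along_axes f x \<longleftrightarrow> (\<forall>i.
     (\<forall>\<^sub>F r in nhds 0. (\<lambda>r. f (x + r *\<^sub>R axis i 1)) differentiable (at r))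
     \<and> deriv (\<lambda>r. f (x + r *\<^sub>R axis i 1)) differentiable (at 0))"

lemma laplacian_lincomb:
  fixes f :: "'g \<Rightarrow> real^'n::finite \<Rightarrow> real"
  assumes "finite S" and "\<And>g. g \<in> S \<Longrightarrow> twice_differentiable_along_axes (f g) x"
  shows "laplacian (\<lambda>x. \<Sum>g\<in>S. w g * f g x) x = (\<Sum>g\<in>S. w g * laplacian (f g) x)"
proof -
  have "deriv (deriv (\<lambda>r. \<Sum>g\<in>S. w g * f g (x + r *\<^sub>R axis i 1))) 0
      = (\<Sum>g\<in>S. w g * deriv (deriv (\<lambda>r. f g (x + r *\<^sub>R axis i 1))) 0)" for i
  proof (rule deriv_deriv_eqI)
    have "\<forall>\<^sub>F r in nhds 0. \<forall>g\<in>S. (\<lambda>r. f g (x + r *\<^sub>R axis i 1)) differentiable (at r)"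
      using assms unfolding twice_differentiable_along_axes_def by (intro eventually_ball_finite) auto
    then show "\<forall>\<^sub>F r in nhds 0. ((\<lambda>r. \<Sum>g\<in>S. w g * f g (x + r *\<^sub>R axis i 1))
        has_real_derivative (\<Sum>g\<in>S. w g * deriv (\<lambda>r. f g (x + r *\<^sub>R axis i 1)) r)) (at r)"
      by eventually_elim
        (auto intro!: DERIV_sum DERIV_cmult simp: DERIV_deriv_iff_real_differentiable)
    show "((\<lambda>r. \<Sum>g\<in>S. w g * deriv (\<lambda>r. f g (x + r *\<^sub>R axis i 1)) r) has_real_derivative
        (\<Sum>g\<in>S. w g * deriv (deriv (\<lambda>r. f g (x + r *\<^sub>R axis i 1))) 0)) (at 0)"
      using assms unfolding twice_differentiable_along_axes_def
      by (auto intro!: DERIV_sum DERIV_cmult simp: DERIV_deriv_iff_real_differentiable)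
  qed
  then show ?thesis
    unfolding laplacian_eq_sum_deriv_deriv by (simp add: sum_distrib_left sum.swap[of _ S UNIV])
qed

lemma polynomial_function_along_line_derivs:
  fixes f :: "'a::real_normed_vector \<Rightarrow> real"
  assumes "polynomial_function f"
  obtains f' f'' where "\<And>r. ((\<lambda>r. f (x + r *\<^sub>R v)) has_real_derivative f' r) (at r)"
    and "\<And>r. (f' has_real_derivative f'' r) (at r)"
proof -
  have "polynomial_function (\<lambda>r::real. x + r *\<^sub>R v)"
    by (intro polynomial_function_add polynomial_function_mult) auto
  from polynomial_function_compose[OF this assms]
  have "real_polynomial_function (\<lambda>r. f (x + r *\<^sub>R v))"
    by (simp add: real_polynomial_function_eq o_def)
  then obtain f' where f': "real_polynomial_function f'"
    and "\<And>r. ((\<lambda>r. f (x + r *\<^sub>R v)) has_real_derivative f' r) (at r)"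
    using has_real_derivative_polynomial_function by blast
  moreover obtain f'' where "\<And>r. (f' has_real_derivative f'' r) (at r)"
    using has_real_derivative_polynomial_function[OF f'] by blast
  ultimately show ?thesis by (intro that)
qed

lemma polynomial_function_twice_differentiable_along_axes:
  assumes "polynomial_function f"
  shows "twice_differentiable_along_axes f x"
  unfolding twice_differentiable_along_axes_def
proof
  fix i
  obtain f' f'' where f': "\<And>r. ((\<lambda>r. f (x + r *\<^sub>R axis i 1)) has_real_derivative f' r) (at r)"
    and f'': "\<And>r. (f' has_real_derivative f'' r) (at r)"
    using polynomial_function_along_line_derivs[OF assms, where x=x and v="axis i 1"] by blast
  have "deriv (\<lambda>r. f (x + r *\<^sub>R axis i 1)) = f'"
    using f' by (intro ext DERIV_imp_deriv)
  then show "(\<forall>\<^sub>F r in nhds 0. (\<lambda>r. f (x + r *\<^sub>R axis i 1)) differentiable (at r))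
      \<and> deriv (\<lambda>r. f (x + r *\<^sub>R axis i 1)) differentiable (at 0)"
    using f' f'' by (auto simp: real_differentiable_def intro: always_eventually)
qed

section \<open>Spherical harmonics\<close>

lemma harmD:
  assumes "Y \<in> harm m"
  shows "polynomial_function Y" "Y (c *\<^sub>R x) = c ^ m * Y x" "laplacian Y x = 0"
  using assms unfolding harm_def by auto

lemma harm_lincomb:
  assumes "finite S" and "\<And>g. g \<in> S \<Longrightarrow> Y g \<in> harm m"
  shows "(\<lambda>x. \<Sum>g\<in>S. c g * Y g x) \<in> harm m"
  unfolding harm_def
proof (intro CollectI conjI allI)
  show "polynomial_function (\<lambda>x. \<Sum>g\<in>S. c g * Y g x)"
    by (rule polynomial_function_sum[OF assms(1)])
      (use polynomial_function_cmul[OF harmD(1)[OF assms(2)]] in simp)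
  show "(\<Sum>g\<in>S. c g * Y g (a *\<^sub>R x)) = a ^ m * (\<Sum>g\<in>S. c g * Y g x)" for a x
    unfolding sum_distrib_left by (rule sum.cong) (auto simp: harmD(2)[OF assms(2)])
  show "laplacian (\<lambda>x. \<Sum>g\<in>S. c g * Y g x) x = 0" for x
  proof -
    have "laplacian (\<lambda>x. \<Sum>g\<in>S. c g * Y g x) x = (\<Sum>g\<in>S. c g * laplacian (Y g) x)"
      using assms by (intro laplacian_lincomb polynomial_function_twice_differentiable_along_axes harmD(1))
    also have "\<dots> = 0"
      using assms(2) harmD(3) by (intro sum.neutral) fastforce
    finally show ?thesis .
  qed
qed

lemma harm_add_scaled:
  assumes "Y1 \<in> harm m" and "Y2 \<in> harm m"
  shows "(\<lambda>x. a * Y1 x + Y2 x) \<in> harm m"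
proof -
  have "(\<lambda>x. \<Sum>b\<in>UNIV. (if b then a else 1) * (if b then Y1 else Y2) x) \<in> harm m"
    using assms by (intro harm_lincomb) auto
  then show ?thesis by (simp add: UNIV_bool add.commute)
qed

lemma zero_in_harm: "(\<lambda>x. 0) \<in> harm m"
  using harm_lincomb[of "{}"] by simp

lemma euler_homogeneous:
  fixes Y :: "real^'n::finite \<Rightarrow> real"
  assumes "Y differentiable (at \<xi>)" and "\<And>c x. Y (c *\<^sub>R x) = c ^ m * Y x"
  shows "(\<Sum>i\<in>UNIV. \<xi> $ i * deriv (\<lambda>r. Y (\<xi> + r *\<^sub>R axis i 1)) 0) = real m * Y \<xi>"
proof -
  obtain D where D: "(Y has_derivative D) (at \<xi>)"
    using assms(1) unfolding differentiable_def by blast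
  then have lin: "linear D" by (rule has_derivative_linear)
  have along: "((\<lambda>r. Y (\<xi> + r *\<^sub>R v)) has_real_derivative D v) (at 0)" for v
  proof -
    have "((\<lambda>r. \<xi> + r *\<^sub>R v) has_derivative (\<lambda>h. h *\<^sub>R v)) (at 0)"
      by (auto intro!: derivative_eq_intros)
    from diff_chain_at[OF this] D
    have "(Y \<circ> (\<lambda>r. \<xi> + r *\<^sub>R v) has_derivative D \<circ> (\<lambda>h. h *\<^sub>R v)) (at 0)" by simp
    moreover have "D \<circ> (\<lambda>h. h *\<^sub>R v) = (*) (D v)"
      using linear_scale[OF lin] by (auto simp: fun_eq_iff)
    ultimately show ?thesis by (simp add: has_field_derivative_def o_def)
  qed
  have "(\<Sum>i\<in>UNIV. \<xi> $ i * deriv (\<lambda>r. Y (\<xi> + r *\<^sub>R axis i 1)) 0) = D (\<Sum>i\<in>UNIV. \<xi> $ i *\<^sub>R axis i 1)"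
    using DERIV_imp_deriv[OF along] by (simp add: linear_sum[OF lin] linear_scale[OF lin])
  also have "(\<Sum>i\<in>UNIV. \<xi> $ i *\<^sub>R axis i 1) = \<xi>"
    using basis_expansion[of \<xi>] by (simp add: scalar_mult_eq_scaleR)
  finally have "(\<Sum>i\<in>UNIV. \<xi> $ i * deriv (\<lambda>r. Y (\<xi> + r *\<^sub>R axis i 1)) 0) = D \<xi>" .
  \<comment> \<open>along the ray through $\xi$ the function is $(1+r)^m Y(\xi)$\<close>
  moreover have "(\<lambda>r. Y (\<xi> + r *\<^sub>R \<xi>)) = (\<lambda>r. (1 + r) ^ m * Y \<xi>)"
    using assms(2)[of "1 + _" \<xi>] by (simp add: scaleR_add_left)
  then have "((\<lambda>r. Y (\<xi> + r *\<^sub>R \<xi>)) has_real_derivative real m * Y \<xi>) (at 0)"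
    by (auto intro!: derivative_eq_intros)
  ultimately show ?thesis
    using DERIV_unique[OF along[of \<xi>]] by simp
qed

lemma norm_add_scaleR_axis_sq:
  assumes "norm \<xi> = 1"
  shows "(norm (\<xi> + r *\<^sub>R axis i 1))\<^sup>2 = 1 + 2 * r * \<xi> $ i + r\<^sup>2"
proof -
  have "(norm (\<xi> + r *\<^sub>R axis i 1))\<^sup>2 = \<xi> \<bullet> \<xi> + 2 * r * (\<xi> \<bullet> axis i 1) + r\<^sup>2 * (axis i 1 \<bullet> axis i (1::real))"
    unfolding power2_norm_eq_inner
    by (simp add: inner_add_left inner_add_right inner_commute power2_eq_square algebra_simps)
  with assms show ?thesis
    by (simp add: inner_axis dot_square_norm)
qed

lemma homogeneous_normalize:
  fixes Y :: "'a::real_normed_vector \<Rightarrow> real"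
  assumes "\<And>c x. Y (c *\<^sub>R x) = c ^ m * Y x" and "x \<noteq> 0"
  shows "Y (x /\<^sub>R norm x) = (norm x)\<^sup>2 powr (- real m / 2) * Y x"
proof -
  have "(norm x)\<^sup>2 powr (- real m / 2) = norm x powr (- real m)"
    by (simp add: powr_powr flip: powr_numeral)
  also have "\<dots> = inverse (norm x) ^ m"
    using assms(2) by (simp add: powr_minus powr_realpow power_inverse)
  finally show ?thesis using assms(1) by simp
qed

lemma DERIV_quadratic_powr:
  fixes x p :: real
  defines "\<rho> \<equiv> \<lambda>r. 1 + 2 * r * x + r\<^sup>2"
  shows "0 < \<rho> r \<Longrightarrow> ((\<lambda>r. \<rho> r powr p) has_real_derivative p * \<rho> r powr (p - 1) * (2 * x + 2 * r)) (at r)"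
    and "((\<lambda>r. p * \<rho> r powr (p - 1) * (2 * x + 2 * r)) has_real_derivative
           p * ((p - 1) * (2 * x) * (2 * x) + 2)) (at 0)"
proof -
  have \<rho>': "(\<rho> has_real_derivative 2 * x + 2 * r) (at r)" for r
    unfolding \<rho>_def by (auto intro!: derivative_eq_intros)
  show "0 < \<rho> r \<Longrightarrow> ((\<lambda>r. \<rho> r powr p) has_real_derivative p * \<rho> r powr (p - 1) * (2 * x + 2 * r)) (at r)"
    using DERIV_fun_powr[OF \<rho>', of r p] by simp
  have "((\<lambda>r. \<rho> r powr (p - 1)) has_real_derivative (p - 1) * (2 * x)) (at 0)"
    using DERIV_fun_powr[OF \<rho>', of 0 "p - 1"] by (simp add: \<rho>_def)
  moreover have "((\<lambda>r. 2 * x + 2 * r) has_real_derivative 2) (at 0)"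
    by (auto intro!: derivative_eq_intros)
  ultimately have "((\<lambda>r. p * \<rho> r powr (p - 1) * (2 * x + 2 * r)) has_real_derivative
      p * ((p - 1) * (2 * x)) * (2 * x + 2 * 0) + 2 * (p * \<rho> 0 powr (p - 1))) (at 0)"
    by (intro DERIV_mult DERIV_cmult)
  then show "((\<lambda>r. p * \<rho> r powr (p - 1) * (2 * x + 2 * r)) has_real_derivative
      p * ((p - 1) * (2 * x) * (2 * x) + 2)) (at 0)"
    by (simp add: \<rho>_def algebra_simps)
qed

lemma harm_normalized_along_axis:
  fixes Y :: "real^'n::finite \<Rightarrow> real"
  assumes "Y \<in> harm m" and "norm \<xi> = 1" and "\<bar>r\<bar> < 1"
  shows "0 < 1 + 2 * r * \<xi> $ i + r\<^sup>2"
    and "Y ((\<xi> + r *\<^sub>R axis i 1) /\<^sub>R norm (\<xi> + r *\<^sub>R axis i 1))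
      = (1 + 2 * r * \<xi> $ i + r\<^sup>2) powr (- real m / 2) * Y (\<xi> + r *\<^sub>R axis i 1)"
proof -
  have "1 - \<bar>r\<bar> \<le> norm (\<xi> + r *\<^sub>R axis i 1)"
    using norm_diff_ineq[of \<xi> "r *\<^sub>R axis i 1"] assms(2) by simp
  with assms(3) have "0 < norm (\<xi> + r *\<^sub>R axis i 1)" by linarith
  then show "0 < 1 + 2 * r * \<xi> $ i + r\<^sup>2"
    using norm_add_scaleR_axis_sq[OF assms(2)] by (metis zero_less_power)
  from \<open>0 < norm _\<close> have "\<xi> + r *\<^sub>R axis i 1 \<noteq> 0" by auto
  from homogeneous_normalize[OF harmD(2)[OF assms(1)] this]
  show "Y ((\<xi> + r *\<^sub>R axis i 1) /\<^sub>R norm (\<xi> + r *\<^sub>R axis i 1))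
      = (1 + 2 * r * \<xi> $ i + r\<^sup>2) powr (- real m / 2) * Y (\<xi> + r *\<^sub>R axis i 1)"
    unfolding norm_add_scaleR_axis_sq[OF assms(2)] .
qed

lemma normalized_harm_axis_derivs:
  fixes Y :: "real^'n::finite \<Rightarrow> real" and i :: 'n
  assumes Y: "Y \<in> harm m" and \<xi>: "norm \<xi> = 1"
  defines "y \<equiv> \<lambda>r. Y (\<xi> + r *\<^sub>R axis i 1)"
  obtains f' where
    "\<forall>\<^sub>F r in nhds 0. ((\<lambda>r. Y ((\<xi> + r *\<^sub>R axis i 1) /\<^sub>R norm (\<xi> + r *\<^sub>R axis i 1)))
       has_real_derivative f' r) (at r)"
    "(f' has_real_derivative (real m * (real m + 2) * (\<xi> $ i)\<^sup>2 - real m) * Y \<xi>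
       - 2 * real m * \<xi> $ i * deriv y 0 + deriv (deriv y) 0) (at 0)"
proof -
  define x where "x = \<xi> $ i"
  define p where "p = - real m / 2"
  define \<phi> where "\<phi> = (\<lambda>r. (1 + 2 * r * x + r\<^sup>2) powr p)"
  define \<phi>' where "\<phi>' = (\<lambda>r. p * (1 + 2 * r * x + r\<^sup>2) powr (p - 1) * (2 * x + 2 * r))"
  obtain y' y'' where y': "\<And>r. (y has_real_derivative y' r) (at r)"
    and y'': "\<And>r. (y' has_real_derivative y'' r) (at r)"
    using polynomial_function_along_line_derivs[OF harmD(1)[OF Y]] unfolding y_def by blast
  have "deriv y 0 = y' 0" "deriv (deriv y) 0 = y'' 0"
    using y' y'' by (auto intro: DERIV_imp_deriv deriv_deriv_eqI always_eventually)
  have \<phi>: "(\<phi> has_real_derivative \<phi>' r) (at r)" if "r \<in> ball 0 1" for r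
    using DERIV_quadratic_powr(1) harm_normalized_along_axis(1)[OF Y \<xi>] that
    unfolding \<phi>_def \<phi>'_def x_def by simp
  have "((\<lambda>r. Y ((\<xi> + r *\<^sub>R axis i 1) /\<^sub>R norm (\<xi> + r *\<^sub>R axis i 1)))
       has_real_derivative \<phi>' r * y r + y' r * \<phi> r) (at r)" if "r \<in> ball 0 1" for r
    by (rule has_field_derivative_transform_within_open[OF DERIV_mult[OF \<phi>[OF that] y'] open_ball that])
      (simp add: harm_normalized_along_axis(2)[OF Y \<xi>] \<phi>_def p_def x_def y_def)
  moreover have "\<forall>\<^sub>F r in nhds 0. r \<in> ball 0 (1::real)"
    by (rule eventually_nhds_in_open) simp_all
  ultimately have "\<forall>\<^sub>F r in nhds 0. ((\<lambda>r. Y ((\<xi> + r *\<^sub>R axis i 1) /\<^sub>R norm (\<xi> + r *\<^sub>R axis i 1)))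
       has_real_derivative \<phi>' r * y r + y' r * \<phi> r) (at r)"
    by (auto elim: eventually_mono)
  moreover have "((\<lambda>r. \<phi>' r * y r + y' r * \<phi> r) has_real_derivative
      p * ((p - 1) * (2 * x) * (2 * x) + 2) * y 0 + y' 0 * \<phi>' 0 + (y'' 0 * \<phi> 0 + y' 0 * \<phi>' 0)) (at 0)"
    using DERIV_add[OF DERIV_mult[OF DERIV_quadratic_powr(2)[where x=x and p=p] y'] DERIV_mult[OF y'' \<phi>[of 0]]]
    unfolding \<phi>'_def by simp
  moreover have "p * ((p - 1) * (2 * x) * (2 * x) + 2) * y 0 + y' 0 * \<phi>' 0 + (y'' 0 * \<phi> 0 + y' 0 * \<phi>' 0)
      = (real m * (real m + 2) * x\<^sup>2 - real m) * Y \<xi> - 2 * real m * x * y' 0 + y'' 0"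
    by (simp add: \<phi>_def \<phi>'_def p_def y_def power2_eq_square algebra_simps)
  ultimately show ?thesis
    using \<open>deriv y 0 = y' 0\<close> \<open>deriv (deriv y) 0 = y'' 0\<close> unfolding x_def by (intro that) simp_all
qed

lemma twice_differentiable_along_axes_normalized_harm:
  assumes "Y \<in> harm m" and "norm \<xi> = 1"
  shows "twice_differentiable_along_axes (\<lambda>x. Y (x /\<^sub>R norm x)) \<xi>"
  unfolding twice_differentiable_along_axes_def
proof
  fix i
  obtain f' v where f': "\<forall>\<^sub>F r in nhds 0. ((\<lambda>r. Y ((\<xi> + r *\<^sub>R axis i 1) /\<^sub>R norm (\<xi> + r *\<^sub>R axis i 1)))
       has_real_derivative f' r) (at r)" and "(f' has_real_derivative v) (at 0)"
    using normalized_harm_axis_derivs[OF assms, of i] by blast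
  then have "(deriv (\<lambda>r. Y ((\<xi> + r *\<^sub>R axis i 1) /\<^sub>R norm (\<xi> + r *\<^sub>R axis i 1)))
      has_real_derivative v) (at 0)"
    by (rule DERIV_deriv_eventually)
  with f' show "(\<forall>\<^sub>F r in nhds 0. (\<lambda>r. Y ((\<xi> + r *\<^sub>R axis i 1) /\<^sub>R norm (\<xi> + r *\<^sub>R axis i 1)))
      differentiable (at r))
    \<and> deriv (\<lambda>r. Y ((\<xi> + r *\<^sub>R axis i 1) /\<^sub>R norm (\<xi> + r *\<^sub>R axis i 1))) differentiable (at 0)"
    by (auto simp: real_differentiable_def elim: eventually_mono)
qed

theorem laplace_beltrami_harm:
  fixes Y :: "real^'n::finite \<Rightarrow> real"
  assumes Y: "Y \<in> harm m" and \<xi>: "norm \<xi> = 1"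
  shows "laplace_beltrami Y \<xi> = - (real m * (real m + real CARD('n) - 2)) * Y \<xi>"
proof -
  define y where "y = (\<lambda>i r. Y (\<xi> + r *\<^sub>R axis i 1))"
  have second_deriv_axis: "deriv (deriv (\<lambda>r. Y ((\<xi> + r *\<^sub>R axis i 1) /\<^sub>R norm (\<xi> + r *\<^sub>R axis i 1)))) 0
      = real m * (real m + 2) * Y \<xi> * (\<xi> $ i)\<^sup>2 - real m * Y \<xi>
        - 2 * real m * (\<xi> $ i * deriv (y i) 0) + deriv (deriv (y i)) 0" for i
  proof -
    obtain f' where "\<forall>\<^sub>F r in nhds 0. ((\<lambda>r. Y ((\<xi> + r *\<^sub>R axis i 1) /\<^sub>R norm (\<xi> + r *\<^sub>R axis i 1)))
       has_real_derivative f' r) (at r)"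
      and "(f' has_real_derivative (real m * (real m + 2) * (\<xi> $ i)\<^sup>2 - real m) * Y \<xi>
       - 2 * real m * \<xi> $ i * deriv (y i) 0 + deriv (deriv (y i)) 0) (at 0)"
      using normalized_harm_axis_derivs[OF Y \<xi>, of i] unfolding y_def by blast
    from deriv_deriv_eqI[OF this] show ?thesis by (simp add: algebra_simps)
  qed
  have "laplace_beltrami Y \<xi> = (\<Sum>i\<in>UNIV. real m * (real m + 2) * Y \<xi> * (\<xi> $ i)\<^sup>2 - real m * Y \<xi>
        - 2 * real m * (\<xi> $ i * deriv (y i) 0) + deriv (deriv (y i)) 0)"
    unfolding laplace_beltrami_def laplacian_eq_sum_deriv_deriv by (rule sum.cong[OF refl second_deriv_axis])
  also have "\<dots> = real m * (real m + 2) * Y \<xi> * (\<Sum>i\<in>UNIV. (\<xi> $ i)\<^sup>2)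
      - real m * Y \<xi> * real CARD('n) - 2 * real m * (\<Sum>i\<in>UNIV. \<xi> $ i * deriv (y i) 0)
      + (\<Sum>i\<in>UNIV. deriv (deriv (y i)) 0)"
    by (simp add: sum.distrib sum_subtractf sum_distrib_left)
  also have "(\<Sum>i\<in>UNIV. (\<xi> $ i)\<^sup>2) = 1"
    using \<xi> by (simp add: norm_vec_def L2_set_def)
  also have "(\<Sum>i\<in>UNIV. \<xi> $ i * deriv (y i) 0) = real m * Y \<xi>"
    unfolding y_def
    by (rule euler_homogeneous[OF _ harmD(2)[OF Y]])
      (rule differentiable_at_polynomial_function[OF harmD(1)[OF Y]])
  also have "(\<Sum>i\<in>UNIV. deriv (deriv (y i)) 0) = 0"
    using harmD(3)[OF Y, of \<xi>] unfolding y_def laplacian_eq_sum_deriv_deriv .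
  finally show ?thesis by (simp add: algebra_simps)
qed

lemma laplace_beltrami_lincomb_harm:
  fixes Y :: "'g \<Rightarrow> real^'n::finite \<Rightarrow> real"
  assumes "finite S" and "\<And>g. g \<in> S \<Longrightarrow> Y g \<in> harm (deg g)" and "norm \<xi> = 1"
  shows "laplace_beltrami (\<lambda>x. \<Sum>g\<in>S. w g * Y g (t *\<^sub>R x)) \<xi>
    = (\<Sum>g\<in>S. w g * t ^ deg g * laplace_beltrami (Y g) \<xi>)"
proof -
  have "(\<lambda>x. \<Sum>g\<in>S. w g * Y g (t *\<^sub>R (x /\<^sub>R norm x)))
      = (\<lambda>x. \<Sum>g\<in>S. (w g * t ^ deg g) * Y g (x /\<^sub>R norm x))"
    using assms(2) by (auto simp: harmD(2) simp del: scaleR_scaleR intro!: sum.cong)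
  moreover have "laplacian (\<lambda>x. \<Sum>g\<in>S. (w g * t ^ deg g) * Y g (x /\<^sub>R norm x)) \<xi>
      = (\<Sum>g\<in>S. (w g * t ^ deg g) * laplacian (\<lambda>x. Y g (x /\<^sub>R norm x)) \<xi>)"
    using assms by (intro laplacian_lincomb twice_differentiable_along_axes_normalized_harm)
  ultimately show ?thesis
    unfolding laplace_beltrami_def by simp
qed

lemma fspan_zero: "(\<lambda>t \<xi>. 0) \<in> fspan G"
  unfolding fspan_def by (intro CollectI exI[of _ "{}"]) auto

lemma fspan_add_scaled:
  assumes "g \<in> G" and "F \<in> fspan G"
  shows "(\<lambda>t \<xi>. a * g t \<xi> + F t \<xi>) \<in> fspan G"
proof -
  obtain S c where S: "finite S" "S \<subseteq> G" and F: "F = (\<lambda>t \<xi>. \<Sum>h\<in>S. c h * h t \<xi>)"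
    using assms(2) unfolding fspan_def by blast
  define c' where "c' = (\<lambda>h. (if h = g then a else 0) + (if h \<in> S then c h else 0))"
  have "(\<Sum>h\<in>insert g S. c' h * h t \<xi>) = a * g t \<xi> + F t \<xi>" for t \<xi>
    using S(1) unfolding c'_def F distrib_right sum.distrib
    by (simp add: mult_delta_left sum.delta sum.If_cases Int_insert_left insert_absorb)
  then show ?thesis
    unfolding fspan_def using S assms(1) by (intro CollectI exI[of _ "insert g S"] exI[of _ c']) auto
qed

lemma fspan_induct [consumes 1, case_names zero add]:
  assumes "F \<in> fspan G" and "P (\<lambda>t \<xi>. 0)"
    and "\<And>a g F. g \<in> G \<Longrightarrow> P F \<Longrightarrow> P (\<lambda>t \<xi>. a * g t \<xi> + F t \<xi>)"
  shows "P F"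
proof -
  obtain S c where S: "finite S" "S \<subseteq> G" and F: "F = (\<lambda>t \<xi>. \<Sum>h\<in>S. c h * h t \<xi>)"
    using assms(1) unfolding fspan_def by blast
  have "P (\<lambda>t \<xi>. \<Sum>h\<in>S. c h * h t \<xi>)"
    using S by (induction S rule: finite_induct) (auto intro: assms(2,3))
  then show ?thesis unfolding F .
qed

lemma fspan_param_representation:
  fixes gen :: "nat \<Rightarrow> 'y \<Rightarrow> 'a \<Rightarrow> 'b \<Rightarrow> real"
  assumes "F \<in> fspan {gen m Y | m Y. m \<le> N \<and> Y \<in> H m}"
  obtains S :: "('a \<Rightarrow> 'b \<Rightarrow> real) set" and deg Y c
  where "finite S" "\<And>g. g \<in> S \<Longrightarrow> deg g \<le> N \<and> Y g \<in> H (deg g)"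
    and "F = (\<lambda>t \<xi>. \<Sum>g\<in>S. c g * gen (deg g) (Y g) t \<xi>)"
proof -
  obtain S c where S: "finite S" "S \<subseteq> {gen m Y | m Y. m \<le> N \<and> Y \<in> H m}"
    and F: "F = (\<lambda>t \<xi>. \<Sum>g\<in>S. c g * g t \<xi>)"
    using assms unfolding fspan_def by blast
  have "\<forall>g\<in>S. \<exists>m Y. g = gen m Y \<and> m \<le> N \<and> Y \<in> H m"
    using S(2) by blast
  then obtain deg Y where "\<And>g. g \<in> S \<Longrightarrow> g = gen (deg g) (Y g) \<and> deg g \<le> N \<and> Y g \<in> H (deg g)"
    by metis
  with S(1) show ?thesis
    by (intro that[of S deg Y c]) (auto simp: F intro!: sum.cong)
qed

section \<open>The eigenvalue equation\<close>

lemma deriv_eq_poly_pderiv: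
  fixes f :: "real \<Rightarrow> real"
  assumes "\<And>r. r < b \<Longrightarrow> f r = poly p r" and "t < b"
  shows "deriv f t = poly (pderiv p) t" and "deriv (deriv f) t = poly (pderiv (pderiv p)) t"
proof -
  have ev: "\<forall>\<^sub>F r in nhds t. r < b"
    using assms(2) by (intro eventually_nhds_in_open[of "{..<b}", simplified]) auto
  have "\<forall>\<^sub>F r in nhds t. (f has_real_derivative poly (pderiv p) r) (at r)"
    using ev
  proof eventually_elim
    case (elim r)
    have "\<forall>\<^sub>F s in nhds r. s < b"
      using elim by (intro eventually_nhds_in_open[of "{..<b}", simplified]) auto
    then have "\<forall>\<^sub>F s in nhds r. f s = poly p s"
      by eventually_elim (rule assms(1))
    then show ?case by (subst DERIV_cong_ev[OF refl _ refl]) (auto intro: poly_DERIV)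
  qed
  then show "deriv f t = poly (pderiv p) t" "deriv (deriv f) t = poly (pderiv (pderiv p)) t"
    by (auto intro: DERIV_imp_deriv deriv_deriv_eqI poly_DERIV elim: eventually_nhds_x_imp_x)
qed

lemma Dcone_jacobiJ_harm_lincomb:
  fixes Y :: "'g \<Rightarrow> real^'n::finite \<Rightarrow> real" and c :: "'g \<Rightarrow> real"
  assumes S: "finite S" and Y: "\<And>g. g \<in> S \<Longrightarrow> Y g \<in> harm (deg g)"
    and deg: "\<And>g. g \<in> S \<Longrightarrow> deg g \<le> n"
    and t: "0 < t" "t \<le> 1" and \<xi>: "norm \<xi> = 1"
  defines "Z \<equiv> \<lambda>t \<xi>. \<Sum>g\<in>S. c g * (jacobiJ (n - deg g) (real (2 * deg g) + real CARD('n) - 2) (1 - 2 * t)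
                                    * Y g (t *\<^sub>R \<xi>))"
  shows "Dcone (-1) Z t \<xi> = - (real n * (real n + real CARD('n) - 2)) * Z t \<xi>"
proof -
  define d where "d = real CARD('n)"
  define ev where "ev = (\<lambda>m. real m * (real m + d - 2))"
  define Q where "Q = (\<lambda>g. jacobiJ_poly (n - deg g) (real (2 * deg g) + d - 2) * monom 1 (deg g))"
  define P where "P = (\<Sum>g\<in>S. smult (c g * Y g \<xi>) (Q g))"
  have Q: "jacobiJ (n - deg g) (real (2 * deg g) + d - 2) (1 - 2 * r) * Y g (r *\<^sub>R x) = Y g x * poly (Q g) r"
    if "g \<in> S" "r \<le> 1" for g r x
    using that by (simp add: Q_def jacobiJ_eq_poly harmD(2)[OF Y] poly_monom)
  have Z_poly: "Z r \<xi> = poly P r" if "r \<le> 1" for r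
    unfolding Z_def P_def d_def[symmetric] poly_sum using that
    by (auto simp: Q simp del: of_nat_mult intro!: sum.cong)
  \<comment> \<open>$Z$ agrees with the polynomial $P$ only for $r \le 1$; at $t = 1$ both derivative terms
    carry the factor $1 - t$\<close>
  have derivs: "t * (1 - t) * deriv (deriv (\<lambda>r. Z r \<xi>)) t = t * (1 - t) * poly (pderiv (pderiv P)) t
      \<and> (d - 1 - (d + -1) * t) * deriv (\<lambda>r. Z r \<xi>) t = (d - 1) * (1 - t) * poly (pderiv P) t"
  proof (cases "t = 1")
    case False
    then show ?thesis
      using deriv_eq_poly_pderiv[of 1 "\<lambda>r. Z r \<xi>" P t] Z_poly t by (simp add: algebra_simps)
  qed simp
  have LB: "laplace_beltrami (Z t) \<xi> = (\<Sum>g\<in>S. c g * Y g \<xi> * (- ev (deg g)) * poly (Q g) t)"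
  proof -
    have "laplace_beltrami (Z t) \<xi> = (\<Sum>g\<in>S. c g * jacobiJ (n - deg g) (real (2 * deg g) + d - 2) (1 - 2 * t)
        * t ^ deg g * laplace_beltrami (Y g) \<xi>)"
      unfolding Z_def d_def mult.assoc[symmetric] by (rule laplace_beltrami_lincomb_harm[OF S Y \<xi>])
    also have "\<dots> = (\<Sum>g\<in>S. c g * Y g \<xi> * (- ev (deg g)) * poly (Q g) t)"
      using t(2) by (intro sum.cong refl)
        (simp add: laplace_beltrami_harm[OF Y \<xi>] ev_def d_def Q_def poly_monom jacobiJ_eq_poly)
    finally show ?thesis .
  qed
  have "Dcone (-1) Z t \<xi> = t * (1 - t) * poly (pderiv (pderiv P)) t + (d - 1) * (1 - t) * poly (pderiv P) t
      + laplace_beltrami (Z t) \<xi> / t"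
    using derivs unfolding Dcone_def d_def by simp
  also have "\<dots> = (\<Sum>g\<in>S. c g * Y g \<xi> * (t * (1 - t) * poly (pderiv (pderiv (Q g))) t
      + (d - 1) * (1 - t) * poly (pderiv (Q g)) t - ev (deg g) * poly (Q g) t / t))"
    unfolding LB P_def
    by (simp add: pderiv_sum pderiv_smult poly_sum sum_distrib_left sum_divide_distrib sum.distrib
        sum_subtractf sum_negf algebra_simps)
  also have "\<dots> = (\<Sum>g\<in>S. c g * Y g \<xi> * (- ev n * poly (Q g) t))"
    using jacobiJ_poly_times_power_ode[OF t(1) deg] by (simp add: Q_def ev_def)
  also have "\<dots> = - ev n * Z t \<xi>"
    unfolding Z_poly[OF t(2)] P_def by (simp add: poly_sum sum_distrib_left algebra_simps)
  finally show ?thesis unfolding ev_def d_def .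
qed

lemma Dcone_Vsob:
  fixes Z :: "real \<Rightarrow> real^'n::finite \<Rightarrow> real"
  assumes "Z \<in> Vsob n" and "0 < t" "t \<le> 1" and "norm \<xi> = 1"
  shows "Dcone (-1) Z t \<xi> = - (real n * (real n + real CARD('n) - 2)) * Z t \<xi>"
proof -
  have "Z \<in> fspan {(\<lambda>m Y t \<xi>. jacobiJ (n - m) (real (2 * m) + real CARD('n) - 2) (1 - 2 * t)
      * Y (t *\<^sub>R \<xi>)) m Y | m Y. m \<le> n \<and> Y \<in> harm m}"
    using assms(1) unfolding Vsob_def by simp
  then obtain S :: "(real \<Rightarrow> real^'n \<Rightarrow> real) set" and deg Y c
    where S: "finite S" "\<And>g. g \<in> S \<Longrightarrow> deg g \<le> n \<and> Y g \<in> harm (deg g)"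
    and Z: "Z = (\<lambda>t \<xi>. \<Sum>g\<in>S. c g * (jacobiJ (n - deg g) (real (2 * deg g) + real CARD('n) - 2) (1 - 2 * t)
      * Y g (t *\<^sub>R \<xi>)))"
    by (rule fspan_param_representation) blast
  show ?thesis
    unfolding Z using S assms(2-) by (intro Dcone_jacobiJ_harm_lincomb) auto
qed

section \<open>The decomposition\<close>

lemma harm_in_Vsob:
  fixes Y :: "real^'n::finite \<Rightarrow> real"
  assumes "Y \<in> harm n"
  shows "(\<lambda>t \<xi>. Y (t *\<^sub>R \<xi>)) \<in> Vsob n"
proof -
  have "(\<lambda>t \<xi>. 1 * (jacobiJ (n - n) (real (2 * n) + real CARD('n) - 2) (1 - 2 * t) * Y (t *\<^sub>R \<xi>)) + 0)
      \<in> Vsob n"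
    unfolding Vsob_def by (rule fspan_add_scaled[OF _ fspan_zero]) (auto intro!: exI[of _ n] assms)
  then show ?thesis by (simp add: jacobiJ_def)
qed

lemma Vsob_decompose:
  fixes Z :: "real \<Rightarrow> real^'n::finite \<Rightarrow> real"
  assumes "Z \<in> Vsob n"
  obtains Y G where "Y \<in> harm n" "G \<in> Vop (n - 1)" "n = 0 \<Longrightarrow> G = (\<lambda>t \<xi>. 0)"
    "\<And>t \<xi>. t \<le> 1 \<Longrightarrow> Z t \<xi> = Y (t *\<^sub>R \<xi>) + (1 - t) * G t \<xi>"
proof -
  have "\<exists>Y G. Y \<in> harm n \<and> G \<in> Vop (n - 1) \<and> (n = 0 \<longrightarrow> G = (\<lambda>t \<xi>. 0))
      \<and> (\<forall>t \<xi>. t \<le> 1 \<longrightarrow> Z t \<xi> = Y (t *\<^sub>R \<xi>) + (1 - t) * G t \<xi>)"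
    using assms unfolding Vsob_def
  proof (induction rule: fspan_induct)
    case zero
    show ?case
      using zero_in_harm fspan_zero by (fastforce simp: Vop_def)
  next
    case (add c g F)
    obtain m Ym where g: "g = (\<lambda>t \<xi>. jacobiJ (n - m) (real (2 * m) + real CARD('n) - 2) (1 - 2 * t)
        * Ym (t *\<^sub>R \<xi>))" and m: "m \<le> n" and Ym: "Ym \<in> harm m"
      using add.hyps by blast
    obtain Y G where Y: "Y \<in> harm n" and G: "G \<in> Vop (n - 1)" and G0: "n = 0 \<longrightarrow> G = (\<lambda>t \<xi>. 0)"
      and F: "\<forall>t \<xi>. t \<le> 1 \<longrightarrow> F t \<xi> = Y (t *\<^sub>R \<xi>) + (1 - t) * G t \<xi>"
      using add.IH by blast
    show ?case
    proof (cases "m = n")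
      case True
      have "(\<lambda>x. c * Ym x + Y x) \<in> harm n"
        using Ym Y True by (intro harm_add_scaled) simp_all
      with G G0 F show ?thesis
        by (intro exI[of _ "\<lambda>x. c * Ym x + Y x"] exI[of _ G]) (simp add: g True jacobiJ_def)
    next
      case False
      define \<kappa> where "\<kappa> = 2 * jacobiA (n - m - 1) (real (2 * m) + real CARD('n) - 2 + 1) 0 / real (n - m)"
      define P where "P = (\<lambda>t (\<xi>::real^'n). jacobiP (n - 1 - m) (real (2 * m) + real CARD('n) - 2) 1 (1 - 2 * t)
        * Ym (t *\<^sub>R \<xi>))"
      have "(\<lambda>t \<xi>. c * \<kappa> * P t \<xi> + G t \<xi>) \<in> Vop (n - 1)"
        unfolding Vop_def using G m False Ym
        by (intro fspan_add_scaled) (auto simp: Vop_def P_def intro!: exI[of _ m])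
      moreover have gP: "g t \<xi> = (1 - t) * (\<kappa> * P t \<xi>)" if "t \<le> 1" for t \<xi>
        using jacobiJ_eq_jacobiP[of "n - m" t] that m False
        by (simp add: g P_def \<kappa>_def diff_commute[of n m 1])
      moreover have "c * g t \<xi> + F t \<xi> = Y (t *\<^sub>R \<xi>) + (1 - t) * (c * \<kappa> * P t \<xi> + G t \<xi>)"
        if "t \<le> 1" for t \<xi>
        by (simp add: gP[OF that] F[rule_format, OF that] algebra_simps)
      ultimately show ?thesis
        using Y False m by (intro exI[of _ Y] exI[of _ "\<lambda>t \<xi>. c * \<kappa> * P t \<xi> + G t \<xi>"]) auto
    qed
  qed
  then show ?thesis using that by blast
qed

lemma Vsob_of_decomposition:
  fixes Y :: "real^'n::finite \<Rightarrow> real"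
  assumes d: "CARD('n) \<ge> 2" and Y: "Y \<in> harm n" and G: "G \<in> Vop (n - 1)" and n: "0 < n"
  obtains Z where "Z \<in> Vsob n" "\<And>t \<xi>. t \<le> 1 \<Longrightarrow> Z t \<xi> = Y (t *\<^sub>R \<xi>) + (1 - t) * G t \<xi>"
proof -
  have "\<exists>Z \<in> Vsob n. \<forall>t \<xi>. t \<le> 1 \<longrightarrow> Z t \<xi> = Y (t *\<^sub>R \<xi>) + (1 - t) * G t \<xi>"
    using G unfolding Vop_def
  proof (induction rule: fspan_induct)
    case zero
    show ?case using harm_in_Vsob[OF Y] by auto
  next
    case (add c g F)
    obtain m Ym where g: "g = (\<lambda>t \<xi>. jacobiP (n - 1 - m) (real (2 * m) + real CARD('n) - 2) 1 (1 - 2 * t)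
        * Ym (t *\<^sub>R \<xi>))" and m: "m < n" and Ym: "Ym \<in> harm m"
      using add.hyps n by fastforce
    obtain Z where Z: "Z \<in> Vsob n" and F: "\<forall>t \<xi>. t \<le> 1 \<longrightarrow> Z t \<xi> = Y (t *\<^sub>R \<xi>) + (1 - t) * F t \<xi>"
      using add.IH by blast
    define \<kappa> where "\<kappa> = 2 * jacobiA (n - m - 1) (real (2 * m) + real CARD('n) - 2 + 1) 0 / real (n - m)"
    have "\<kappa> \<noteq> 0"
      using jacobiA_pos[of "real (2 * m) + real CARD('n) - 2" "n - m - 1"] d m by (simp add: \<kappa>_def)
    define J where "J = (\<lambda>t (\<xi>::real^'n). jacobiJ (n - m) (real (2 * m) + real CARD('n) - 2) (1 - 2 * t)
        * Ym (t *\<^sub>R \<xi>))"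
    have "(\<lambda>t \<xi>. c / \<kappa> * J t \<xi> + Z t \<xi>) \<in> Vsob n"
      unfolding Vsob_def using Z m Ym
      by (intro fspan_add_scaled) (auto simp: Vsob_def J_def intro!: exI[of _ m])
    moreover have Jg: "J t \<xi> = \<kappa> * ((1 - t) * g t \<xi>)" if "t \<le> 1" for t \<xi>
      using jacobiJ_eq_jacobiP[of "n - m" t] that m by (simp add: g J_def \<kappa>_def diff_commute[of n m 1])
    moreover have "c / \<kappa> * J t \<xi> + Z t \<xi> = Y (t *\<^sub>R \<xi>) + (1 - t) * (c * g t \<xi> + F t \<xi>)"
      if "t \<le> 1" for t \<xi>
      using \<open>\<kappa> \<noteq> 0\<close> by (simp add: Jg[OF that] F[rule_format, OF that] algebra_simps)
    ultimately show ?case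
      by (intro bexI[of _ "\<lambda>t \<xi>. c / \<kappa> * J t \<xi> + Z t \<xi>"]) auto
  qed
  then show ?thesis using that by blast
qed

lemma cone_restrict_eqI:
  assumes "\<And>t \<xi>. t \<le> 1 \<Longrightarrow> F t \<xi> = G t \<xi>"
  shows "cone_restrict F = cone_restrict G"
  using assms unfolding cone_restrict_def by (simp add: fun_eq_iff)

lemma cone_restrict_Vsob:
  assumes "CARD('n::finite) \<ge> 2"
  shows "cone_restrict ` (Vsob n :: (real \<Rightarrow> real^'n \<Rightarrow> real) set)
    = cone_restrict ` {(\<lambda>t \<xi>. Y (t *\<^sub>R \<xi>) + W t \<xi>) | Y W. Y \<in> harm n \<and>
        W \<in> {\<lambda>t \<xi>. 0} \<union> {(\<lambda>t \<xi>. (1 - t) * G t \<xi>) | G. 0 < n \<and> G \<in> Vop (n - 1)}}"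
    (is "_ = cone_restrict ` ?S")
proof (intro subset_antisym image_subsetI)
  fix Z :: "real \<Rightarrow> real^'n \<Rightarrow> real"
  assume "Z \<in> Vsob n"
  then obtain Y G where Y: "Y \<in> harm n" and G: "G \<in> Vop (n - 1)" "n = 0 \<Longrightarrow> G = (\<lambda>t \<xi>. 0)"
    and Z: "\<And>t \<xi>. t \<le> 1 \<Longrightarrow> Z t \<xi> = Y (t *\<^sub>R \<xi>) + (1 - t) * G t \<xi>"
    by (rule Vsob_decompose) blast
  define W where "W = (if n = 0 then (\<lambda>t \<xi>. 0) else (\<lambda>t (\<xi>::real^'n). (1 - t) * G t \<xi>))"
  have "W \<in> {\<lambda>t \<xi>. 0} \<union> {(\<lambda>t \<xi>. (1 - t) * G t \<xi>) | G. 0 < n \<and> G \<in> Vop (n - 1)}"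
    using G by (auto simp: W_def)
  with Y have mem: "(\<lambda>t \<xi>. Y (t *\<^sub>R \<xi>) + W t \<xi>) \<in> ?S"
    by (intro CollectI exI[of _ Y] exI[of _ W]) simp
  have "cone_restrict Z = cone_restrict (\<lambda>t \<xi>. Y (t *\<^sub>R \<xi>) + W t \<xi>)"
    using G by (intro cone_restrict_eqI) (simp add: Z W_def)
  then show "cone_restrict Z \<in> cone_restrict ` ?S"
    using mem by (rule image_eqI)
next
  fix E :: "real \<Rightarrow> real^'n \<Rightarrow> real"
  assume "E \<in> ?S"
  then show "cone_restrict E \<in> cone_restrict ` Vsob n"
  proof (elim CollectE exE conjE UnE singletonE)
    fix Y :: "real^'n \<Rightarrow> real" and W
    assume "E = (\<lambda>t \<xi>. Y (t *\<^sub>R \<xi>) + W t \<xi>)" "Y \<in> harm n" "W = (\<lambda>t \<xi>. 0)"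
    then show ?thesis by (simp add: harm_in_Vsob)
  next
    fix Y :: "real^'n \<Rightarrow> real" and W G
    assume E: "E = (\<lambda>t \<xi>. Y (t *\<^sub>R \<xi>) + W t \<xi>)" and Y: "Y \<in> harm n"
      and W: "W = (\<lambda>t \<xi>. (1 - t) * G t \<xi>)" and "0 < n" "G \<in> Vop (n - 1)"
    then obtain Z where Z: "Z \<in> Vsob n" "\<And>t \<xi>. t \<le> 1 \<Longrightarrow> Z t \<xi> = Y (t *\<^sub>R \<xi>) + (1 - t) * G t \<xi>"
      using Vsob_of_decomposition[OF assms Y] by blast
    have "cone_restrict E = cone_restrict Z"
      unfolding E W by (intro cone_restrict_eqI) (simp add: Z(2))
    then show ?thesis
      using Z(1) by (rule image_eqI)
  qed
qed

lemma cone_restrict_harm_eq_one_minus_t: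
  assumes "Y \<in> harm n"
    and "cone_restrict (\<lambda>t \<xi>. Y (t *\<^sub>R \<xi>)) = cone_restrict (\<lambda>t \<xi>. (1 - t) * G t \<xi>)"
  shows "cone_restrict (\<lambda>t \<xi>. Y (t *\<^sub>R \<xi>)) = cone_restrict (\<lambda>t \<xi>. 0)"
proof -
  have "Y \<xi> = 0" if "norm \<xi> = 1" for \<xi>
    using fun_cong[OF fun_cong[OF assms(2), of 1], of \<xi>] that by (simp add: cone_restrict_def)
  then show ?thesis
    by (auto simp: cone_restrict_def fun_eq_iff harmD(2)[OF assms(1)])
qed

theorem mainTheorem9:
  fixes n :: nat
  assumes d2: "CARD('n::finite) \<ge> 2"
  shows "(\<forall>Z \<in> (Vsob n :: (real \<Rightarrow> real^'n \<Rightarrow> real) set).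
            \<forall>t \<xi>. 0 < t \<and> t \<le> 1 \<and> norm \<xi> = 1 \<longrightarrow>
              Dcone (-1) Z t \<xi> = - (real n * (real n + real CARD('n) - 2)) * Z t \<xi>)
       \<and> cone_restrict ` (Vsob n :: (real \<Rightarrow> real^'n \<Rightarrow> real) set)
           = cone_restrict ` {(\<lambda>t \<xi>. Y (t *\<^sub>R \<xi>) + W t \<xi>) | Y W.
                Y \<in> harm n \<and>
                W \<in> {\<lambda>t \<xi>. 0} \<union> {(\<lambda>t \<xi>. (1 - t) * G t \<xi>) | G. 0 < n \<and> G \<in> Vop (n - 1)}}
       \<and> (\<forall>Y \<in> (harm n :: (real^'n \<Rightarrow> real) set). \<forall>G \<in> (Vop (n - 1) :: (real \<Rightarrow> real^'n \<Rightarrow> real) set).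
            0 < n \<and> cone_restrict (\<lambda>t \<xi>. Y (t *\<^sub>R \<xi>)) = cone_restrict (\<lambda>t \<xi>. (1 - t) * G t \<xi>)
            \<longrightarrow> cone_restrict (\<lambda>t \<xi>. Y (t *\<^sub>R \<xi>)) = cone_restrict (\<lambda>t \<xi>. 0))"
proof (intro conjI ballI allI impI)
  show "Dcone (-1) Z t \<xi> = - (real n * (real n + real CARD('n) - 2)) * Z t \<xi>"
    if "Z \<in> Vsob n" and "0 < t \<and> t \<le> 1 \<and> norm \<xi> = 1" for Z :: "real \<Rightarrow> real^'n \<Rightarrow> real"
    and t \<xi>
    using that by (intro Dcone_Vsob) auto
  show "cone_restrict (\<lambda>t \<xi>. Y (t *\<^sub>R \<xi>)) = cone_restrict (\<lambda>t \<xi>. 0)"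
    if "Y \<in> harm n" and "0 < n \<and> cone_restrict (\<lambda>t \<xi>. Y (t *\<^sub>R \<xi>)) = cone_restrict (\<lambda>t \<xi>. (1 - t) * G t \<xi>)"
    for Y :: "real^'n \<Rightarrow> real" and G
    using that by (intro cone_restrict_harm_eq_one_minus_t) auto
qed (rule cone_restrict_Vsob[OF d2])

end
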